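(* Fix $0<q<1$ and $t\in\mathbb R$. The collection of distributions $G\in\mathcal G$ satisfying $T_q(G)=t$ is convex, and the collection of distributions $G\in\mathcal G$ satisfying $T_q(G)\ge t$ is convex.
   Context: $E(t)=1-e^{-t}$, $\bar E=1-E$, $\bar G=1-G$. $\mathcal G=\{E\#F:F$ a probability distribution on $[1,\infty)\}$ with $(E\#F)(t)=\int E(t/\mu)\,dF(\mu)$. FDR functional $T_q(G)=\inf\{t:\bar G(t)\ge\frac1q\bar E(t)\}$ (with $\inf\emptyset=+\infty$). *)

theory Defs
  imports "HOL-Probability.Probability"
begin

definition Eexp :: "real \<Rightarrow> real" where
  "Eexp t = 1 - exp (- t)"

definition scale_mix :: "real measure \<Rightarrow> real \<Rightarrow> real" where
  "scale_mix F t = (\<integral>\<mu>. Eexp (t / \<mu>) \<partial>F)"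

definition mixing_dist :: "real measure \<Rightarrow> bool" where
  "mixing_dist F \<longleftrightarrow> prob_space F \<and> sets F = sets borel \<and> measure F {1..} = 1"

definition GG :: "(real \<Rightarrow> real) set" where
  "GG = {G. \<exists>F. mixing_dist F \<and> G = scale_mix F}"

text \<open>FDR functional T_q(G) = inf{t. 1 - G t \<ge> (1/q)(1 - E t)}, with inf of the empty set = +infinity.\<close>
definition Tq :: "real \<Rightarrow> (real \<Rightarrow> real) \<Rightarrow> ereal" where
  "Tq q G = Inf {ereal s | s. 1 - G s \<ge> (1 / q) * (1 - Eexp s)}"

definition fun_convex :: "(real \<Rightarrow> real) set \<Rightarrow> bool" where
  "fun_convex S \<longleftrightarrow> (\<forall>G1\<in>S. \<forall>G2\<in>S. \<forall>a::real. 0 \<le> a \<and> a \<le> 1 \<longrightarrow>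
      (\<lambda>s. a * G1 s + (1 - a) * G2 s) \<in> S)"

end

theory Submission
  imports Defs
begin

text \<open>
  For G = E # F with F concentrated on [1, \<infinity>), the function
  exp s * (1 - G s) = \<integral> exp (s (1 - 1/\<mu>)) dF(\<mu>) is nondecreasing. Since 1 - E s = exp (-s),
  the region R(G) = {s. 1 - G s \<ge> (1 - E s)/q}, whose infimum is T_q(G), equals
  {s. exp s * (1 - G s) \<ge> 1/q} and is therefore closed upwards. A mixture H of G1 and G2
  satisfies R(G1) \<inter> R(G2) \<subseteq> R(H) \<subseteq> R(G1) \<union> R(G2): the second inclusion gives
  T_q(H) \<ge> min (T_q G1) (T_q G2), and the first one, together with upward closedness, gives
  T_q(H) \<le> max (T_q G1) (T_q G2). Finally the class of scale mixtures is closed under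
  mixtures, because E # (a F1 + (1 - a) F2) = a (E # F1) + (1 - a) (E # F2).
\<close>

lemma mixing_dist_borel_measurable:
  assumes "mixing_dist F" and "f \<in> borel_measurable borel"
  shows "f \<in> borel_measurable F"
proof -
  have "sets F = sets borel" using assms(1) by (simp add: mixing_dist_def)
  then show ?thesis using assms(2) by (simp cong: measurable_cong_sets)
qed

lemma mixing_dist_AE_ge_1:
  assumes "mixing_dist F"
  shows "AE \<mu> in F. 1 \<le> \<mu>"
proof -
  interpret prob_space F using assms by (simp add: mixing_dist_def)
  have "AE \<mu> in F. \<mu> \<in> {1..}"
    using assms by (intro AE_prob_1) (auto simp: mixing_dist_def)
  then show ?thesis by auto
qed

text \<open>Replacing \<mu> by max 1 \<mu> makes the integrands bounded everywhere, not only almost everywhere.\<close>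

lemma scale_mix_eq_max_1:
  assumes "mixing_dist F"
  shows "scale_mix F s = (\<integral>\<mu>. Eexp (s / max 1 \<mu>) \<partial>F)"
  unfolding scale_mix_def
  by (rule integral_cong_AE)
     (auto intro!: mixing_dist_borel_measurable[OF assms] eventually_mono[OF mixing_dist_AE_ge_1[OF assms]]
           simp: Eexp_def)

lemma exp_neg_div_max_1_le:
  fixes s \<mu> :: real
  shows "exp (- (s / max 1 \<mu>)) \<le> exp \<bar>s\<bar>"
proof -
  have "\<bar>s\<bar> / max 1 \<mu> \<le> \<bar>s\<bar> / 1"
    by (rule divide_left_mono) auto
  then have "\<bar>s / max 1 \<mu>\<bar> \<le> \<bar>s\<bar>"
    by (simp add: abs_div)
  then have "- (s / max 1 \<mu>) \<le> \<bar>s\<bar>"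
    by linarith
  then show ?thesis by simp
qed

lemma abs_Eexp_div_max_1_le:
  fixes s \<mu> :: real
  shows "\<bar>Eexp (s / max 1 \<mu>)\<bar> \<le> 1 + exp \<bar>s\<bar>"
  using exp_neg_div_max_1_le[of s \<mu>] exp_gt_zero[of "- (s / max 1 \<mu>)"]
  unfolding Eexp_def by linarith

lemma integrable_exp_neg_div_max_1:
  assumes "mixing_dist F"
  shows "integrable F (\<lambda>\<mu>. exp (- (s / max 1 \<mu>)))"
proof -
  interpret prob_space F using assms by (simp add: mixing_dist_def)
  show ?thesis
    by (rule integrable_const_bound[where B = "exp \<bar>s\<bar>"])
       (use exp_neg_div_max_1_le in \<open>auto intro!: mixing_dist_borel_measurable[OF assms]\<close>)
qed

lemma one_minus_scale_mix:
  assumes "mixing_dist F"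
  shows "1 - scale_mix F s = (\<integral>\<mu>. exp (- (s / max 1 \<mu>)) \<partial>F)"
proof -
  interpret prob_space F using assms by (simp add: mixing_dist_def)
  have "scale_mix F s = (\<integral>\<mu>. 1 - exp (- (s / max 1 \<mu>)) \<partial>F)"
    unfolding scale_mix_eq_max_1[OF assms] Eexp_def ..
  also have "\<dots> = 1 - (\<integral>\<mu>. exp (- (s / max 1 \<mu>)) \<partial>F)"
    using integrable_exp_neg_div_max_1[OF assms] by (simp add: prob_space)
  finally show ?thesis by simp
qed

lemma mono_exp_mult_one_minus_scale_mix:
  assumes "mixing_dist F"
  shows "mono (\<lambda>s. exp s * (1 - scale_mix F s))"
proof (rule monoI)
  fix s s' :: real
  assume "s \<le> s'"
  have "s * (1 - 1 / max 1 \<mu>) \<le> s' * (1 - 1 / max 1 \<mu>)" for \<mu> :: real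
    using \<open>s \<le> s'\<close> by (intro mult_right_mono) auto
  then have "exp s * exp (- (s / max 1 \<mu>)) \<le> exp s' * exp (- (s' / max 1 \<mu>))" for \<mu> :: real
    by (simp add: mult_exp_exp right_diff_distrib)
  then have "(\<integral>\<mu>. exp s * exp (- (s / max 1 \<mu>)) \<partial>F) \<le> (\<integral>\<mu>. exp s' * exp (- (s' / max 1 \<mu>)) \<partial>F)"
    by (intro integral_mono integrable_mult_right integrable_exp_neg_div_max_1[OF assms])
  then show "exp s * (1 - scale_mix F s) \<le> exp s' * (1 - scale_mix F s')"
    by (simp add: one_minus_scale_mix[OF assms])
qed

lemma mixing_dist_kernel_measurable:
  assumes "\<And>x. mixing_dist (N x)"
  shows "N \<in> measurable (measure_pmf p) (subprob_algebra borel)"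
  using assms
  by (auto simp: mixing_dist_def space_subprob_algebra intro: prob_space_imp_subprob_space)

lemma mixing_dist_bind_pmf:
  assumes "\<And>x. mixing_dist (N x)"
  shows "mixing_dist (measure_pmf p \<bind> N)"
proof -
  note N = mixing_dist_kernel_measurable[OF assms]
  have "prob_space (measure_pmf p \<bind> N)"
    by (rule measure_pmf.prob_space_bind[OF _ N]) (use assms in \<open>simp add: mixing_dist_def\<close>)
  moreover have "measure (measure_pmf p \<bind> N) {1..} = 1"
    using assms by (simp add: measure_pmf.measure_bind[OF N] mixing_dist_def)
  moreover have "sets (measure_pmf p \<bind> N) = sets borel"
    by (rule sets_bind) (use assms in \<open>auto simp: mixing_dist_def\<close>)
  ultimately show ?thesis
    by (simp add: mixing_dist_def)
qed

lemma scale_mix_bind_pmf: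
  assumes "\<And>x. mixing_dist (N x)"
  shows "scale_mix (measure_pmf p \<bind> N) s = (\<integral>x. scale_mix (N x) s \<partial>p)"
proof -
  have integrand_measurable: "(\<lambda>\<mu>. Eexp (s / max 1 \<mu>)) \<in> borel_measurable borel"
    unfolding Eexp_def by measurable
  have "scale_mix (measure_pmf p \<bind> N) s = (\<integral>\<mu>. Eexp (s / max 1 \<mu>) \<partial>(measure_pmf p \<bind> N))"
    by (rule scale_mix_eq_max_1[OF mixing_dist_bind_pmf[OF assms]])
  also have "\<dots> = (\<integral>x. (\<integral>\<mu>. Eexp (s / max 1 \<mu>) \<partial>N x) \<partial>p)"
    using assms
    by (intro integral_bind[OF _ _ mixing_dist_kernel_measurable[OF assms], where B = "1 + exp \<bar>s\<bar>" and B' = 1])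
       (auto intro: abs_Eexp_div_max_1_le integrand_measurable prob_space.finite_measure prob_space_measure_pmf
             simp: mixing_dist_def prob_space.emeasure_space_1)
  also have "\<dots> = (\<integral>x. scale_mix (N x) s \<partial>p)"
    using scale_mix_eq_max_1[OF assms] by simp
  finally show ?thesis .
qed

lemma GG_mix:
  assumes "G1 \<in> GG" "G2 \<in> GG" "0 \<le> a" "a \<le> 1"
  shows "(\<lambda>s. a * G1 s + (1 - a) * G2 s) \<in> GG"
proof -
  obtain F1 F2 where F: "mixing_dist F1" "mixing_dist F2" "G1 = scale_mix F1" "G2 = scale_mix F2"
    using assms(1,2) unfolding GG_def by blast
  define N where "N b = (if b then F1 else F2)" for b
  have N: "mixing_dist (N b)" for b
    using F by (simp add: N_def)
  have "scale_mix (measure_pmf (bernoulli_pmf a) \<bind> N) s = a * G1 s + (1 - a) * G2 s" for s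
    using assms(3,4) by (simp add: scale_mix_bind_pmf[OF N] N_def F)
  then show ?thesis
    unfolding GG_def using mixing_dist_bind_pmf[OF N] by (auto intro!: exI[of _ "measure_pmf (bernoulli_pmf a) \<bind> N"])
qed

definition rejection_region :: "real \<Rightarrow> (real \<Rightarrow> real) \<Rightarrow> real set" where
  "rejection_region q G = {s. (1 / q) * (1 - Eexp s) \<le> 1 - G s}"

lemma Tq_eq_Inf_rejection_region: "Tq q G = Inf (ereal ` rejection_region q G)"
  unfolding Tq_def rejection_region_def by (simp add: image_Collect)

lemma mem_rejection_region_iff: "s \<in> rejection_region q G \<longleftrightarrow> 1 / q \<le> exp s * (1 - G s)"
proof -
  have "exp s * ((1 / q) * (1 - Eexp s)) = 1 / q"
    by (simp add: Eexp_def exp_minus)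
  then show ?thesis
    unfolding rejection_region_def mem_Collect_eq
    by (metis exp_gt_zero mult_le_cancel_left_pos)
qed

lemma rejection_region_upward_closed:
  assumes "G \<in> GG" "s \<in> rejection_region q G" "s \<le> s'"
  shows "s' \<in> rejection_region q G"
proof -
  obtain F where "mixing_dist F" "G = scale_mix F"
    using assms(1) unfolding GG_def by blast
  then have "exp s * (1 - G s) \<le> exp s' * (1 - G s')"
    using mono_exp_mult_one_minus_scale_mix assms(3) by (auto dest: monoD)
  then show ?thesis
    using assms(2) by (simp add: mem_rejection_region_iff)
qed

lemma rejection_region_mix_subset:
  assumes "0 \<le> a" "a \<le> 1"
  shows "rejection_region q (\<lambda>s. a * G1 s + (1 - a) * G2 s) \<subseteq> rejection_region q G1 \<union> rejection_region q G2"
proof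
  fix s
  assume s: "s \<in> rejection_region q (\<lambda>s. a * G1 s + (1 - a) * G2 s)"
  show "s \<in> rejection_region q G1 \<union> rejection_region q G2"
  proof (rule ccontr)
    let ?c = "(1 / q) * (1 - Eexp s)"
    assume "s \<notin> rejection_region q G1 \<union> rejection_region q G2"
    then have "a * (1 - G1 s) + (1 - a) * (1 - G2 s) < ?c"
      using assms by (intro convex_bound_lt) (auto simp: rejection_region_def)
    then show False
      using s by (simp add: rejection_region_def algebra_simps)
  qed
qed

lemma rejection_region_Int_subset_mix:
  assumes "0 \<le> a" "a \<le> 1"
  shows "rejection_region q G1 \<inter> rejection_region q G2 \<subseteq> rejection_region q (\<lambda>s. a * G1 s + (1 - a) * G2 s)"
proof
  fix s
  let ?c = "(1 / q) * (1 - Eexp s)"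
  assume "s \<in> rejection_region q G1 \<inter> rejection_region q G2"
  then have "?c \<le> 1 - G1 s" "?c \<le> 1 - G2 s"
    by (simp_all add: rejection_region_def)
  then have "a * ?c \<le> a * (1 - G1 s)" "(1 - a) * ?c \<le> (1 - a) * (1 - G2 s)"
    using assms by (metis diff_ge_0_iff_ge mult_left_mono)+
  moreover have "?c = a * ?c + (1 - a) * ?c"
    by (simp only: distrib_right[symmetric]) simp
  moreover have "1 - (a * G1 s + (1 - a) * G2 s) = a * (1 - G1 s) + (1 - a) * (1 - G2 s)"
    by (simp add: algebra_simps)
  ultimately show "s \<in> rejection_region q (\<lambda>s. a * G1 s + (1 - a) * G2 s)"
    unfolding rejection_region_def mem_Collect_eq by linarith
qed

lemma Inf_ereal_image_less_imp_mem:
  assumes "\<And>x y. x \<in> A \<Longrightarrow> x \<le> y \<Longrightarrow> y \<in> A" and "Inf (ereal ` A) < ereal r"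
  shows "r \<in> A"
proof -
  obtain x where "x \<in> A" "x < r"
    using assms(2) by (auto simp: Inf_less_iff)
  then show ?thesis
    using assms(1) by simp
qed

lemma mem_rejection_region_if_Tq_less:
  assumes "G \<in> GG" "Tq q G < ereal r"
  shows "r \<in> rejection_region q G"
proof (rule Inf_ereal_image_less_imp_mem)
  show "y \<in> rejection_region q G" if "x \<in> rejection_region q G" "x \<le> y" for x y
    using assms(1) that by (rule rejection_region_upward_closed)
  show "Inf (ereal ` rejection_region q G) < ereal r"
    using assms(2) by (simp add: Tq_eq_Inf_rejection_region)
qed

lemma Tq_mix_ge:
  assumes "0 \<le> a" "a \<le> 1" "ereal t \<le> Tq q G1" "ereal t \<le> Tq q G2"
  shows "ereal t \<le> Tq q (\<lambda>s. a * G1 s + (1 - a) * G2 s)"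
  using assms rejection_region_mix_subset[OF assms(1,2)]
  by (fastforce simp: Tq_eq_Inf_rejection_region le_Inf_iff)

lemma Tq_mix_le:
  assumes "G1 \<in> GG" "G2 \<in> GG" "0 \<le> a" "a \<le> 1" "Tq q G1 \<le> ereal t" "Tq q G2 \<le> ereal t"
  shows "Tq q (\<lambda>s. a * G1 s + (1 - a) * G2 s) \<le> ereal t"
proof (rule ereal_le_epsilon2)
  fix e :: real
  assume "0 < e"
  then have "Tq q G1 < ereal (t + e)" "Tq q G2 < ereal (t + e)"
    using assms(5,6) by (auto intro: le_less_trans)
  then have "t + e \<in> rejection_region q G1 \<inter> rejection_region q G2"
    using assms(1,2) by (blast intro: mem_rejection_region_if_Tq_less)
  then have "t + e \<in> rejection_region q (\<lambda>s. a * G1 s + (1 - a) * G2 s)"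
    using rejection_region_Int_subset_mix[OF assms(3,4)] by blast
  then show "Tq q (\<lambda>s. a * G1 s + (1 - a) * G2 s) \<le> ereal t + ereal e"
    by (simp add: Tq_eq_Inf_rejection_region INF_lower)
qed

lemma fun_convex_Tq_eq: "fun_convex {G \<in> GG. Tq q G = ereal t}"
  unfolding fun_convex_def
proof (intro ballI allI impI)
  fix G1 G2 and a :: real
  assume "G1 \<in> {G \<in> GG. Tq q G = ereal t}" "G2 \<in> {G \<in> GG. Tq q G = ereal t}" "0 \<le> a \<and> a \<le> 1"
  then have G: "G1 \<in> GG" "G2 \<in> GG" "Tq q G1 = ereal t" "Tq q G2 = ereal t" and a: "0 \<le> a" "a \<le> 1"
    by simp_all
  have "Tq q (\<lambda>s. a * G1 s + (1 - a) * G2 s) = ereal t"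
  proof (rule order_antisym)
    show "Tq q (\<lambda>s. a * G1 s + (1 - a) * G2 s) \<le> ereal t"
      using G a by (intro Tq_mix_le) simp_all
    show "ereal t \<le> Tq q (\<lambda>s. a * G1 s + (1 - a) * G2 s)"
      using G a by (intro Tq_mix_ge) simp_all
  qed
  with G a show "(\<lambda>s. a * G1 s + (1 - a) * G2 s) \<in> {G \<in> GG. Tq q G = ereal t}"
    by (simp add: GG_mix)
qed

lemma fun_convex_Tq_ge: "fun_convex {G \<in> GG. ereal t \<le> Tq q G}"
  unfolding fun_convex_def
proof (intro ballI allI impI)
  fix G1 G2 and a :: real
  assume "G1 \<in> {G \<in> GG. ereal t \<le> Tq q G}" "G2 \<in> {G \<in> GG. ereal t \<le> Tq q G}" "0 \<le> a \<and> a \<le> 1"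
  then show "(\<lambda>s. a * G1 s + (1 - a) * G2 s) \<in> {G \<in> GG. ereal t \<le> Tq q G}"
    by (simp add: GG_mix Tq_mix_ge)
qed

theorem lemma4p2:
  fixes q t :: real
  assumes "0 < q" and "q < 1"
  shows "fun_convex {G \<in> GG. Tq q G = ereal t} \<and> fun_convex {G \<in> GG. Tq q G \<ge> ereal t}"
  using fun_convex_Tq_eq fun_convex_Tq_ge by (rule conjI)

end
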